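(* Fix $n\ge2$, a connected undirected graph $G$ on $n$ nodes with $m$ edges, and $\tau^*\in\mathbb R$. Run BQ-CADMM on $G$ with local data $r_i=\log\frac{dP_1}{dP_2}(y_i)$, quantizer parameters $a=\tau^*-1$, $\Delta=2$, $\delta=1$ (so the threshold is $\tau^*$), and $0<\rho<\frac{n}{4m}$. Let $\mathcal A_n=\{y^n:\text{BQ-CADMM cycles}\}\cup\{y^n:\text{BQ-CADMM converges at }\tau^*+1\}$. For $Q\in\{P_1,P_2\}$ let $F_Q(t)=Q\big(\{y^n:\frac1n\log\frac{dP_1}{dP_2}(y^n)\le t\}\big)$. Then $$1-F_Q\Big(\tau^*+4\rho\tfrac{m}{n}\Big)\le Q(\mathcal A_n)\le 1-F_Q(\tau^*-12\rho n).$$ Consequently, if $F_Q$ is continuous at $\tau^*$, then $Q(\mathcal A_n)\to Q(\mathcal A_n^* )=1-F_Q(\tau^* )$ as $\rho\to0$, where $\mathcal A_n^*=\{y^n:\frac1n\log\frac{dP_1}{dP_2}(y^n)>\tau^*\}$; in particular, if this continuity holds for both $P_1$ and $P_2$, the type-I and type-II error probabilities of $\mathcal A_n$ converge to those of $\mathcal A_n^*$ as $\rho\to0$.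
   Context: $P_1,P_2$ are mutually absolutely continuous probability measures on a Polish space (or finite set) $\Sigma$; $\log$ is the natural logarithm; $y_1,\dots,y_n$ are i.i.d., node $i$ observing $y_i$, and $\frac{dP_1}{dP_2}(y^n)=\prod_i\frac{dP_1}{dP_2}(y_i)$; probabilities of subsets of $\Sigma^n$ refer to product measures. Network and algorithm: $G$ is a connected undirected simple graph on nodes $\{1,\dots,n\}$ with $m$ edges; $\mathcal N_i$ is the set of neighbors of node $i$ ($i\notin\mathcal N_i$). Given $a\in\mathbb R$, $\Delta>0$, $\delta\in(0,\Delta)$, the $\delta$-quantizer is $\mathcal Q_\delta(x)=a$ if $x\le a+\Delta-\delta$ and $a+\Delta$ otherwise. Given local data $r_1,\dots,r_n\in\mathbb R$ and $\rho>0$, BQ-CADMM is the deterministic iteration with $x_i^0=0$, $\alpha_i^0=0$ and, for $k\ge0$, $$x_i^{k+1}=\frac{1}{1+2\rho|\mathcal N_i|}\Big(\rho|\mathcal N_i|\mathcal Q_\delta(x_i^k)+\rho\sum_{j\in\mathcal N_i}\mathcal Q_\delta(x_j^k)-\alpha_i^k+r_i\Big),\quad \alpha_i^{k+1}=\alpha_i^k+\rho\Big(|\mathcal N_i|\mathcal Q_\delta(x_i^{k+1})-\sum_{j\in\mathcal N_i}\mathcal Q_\delta(x_j^{k+1})\Big).$$ BQ-CADMM "converges at $c$" if there is $k_0$ with $\mathcal Q_\delta(x_i^k)=c$ for all $i$ and all $k\ge k_0$; it "cycles" if it converges at neither $a$ nor $a+\Delta$. *)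

theory Defs
  imports "HOL-Probability.Probability"
begin

definition quant :: "real \<Rightarrow> real \<Rightarrow> real \<Rightarrow> real \<Rightarrow> real" where
  "quant a D d x = (if x \<le> a + D - d then a else a + D)"

definition nbrs :: "(nat \<Rightarrow> nat \<Rightarrow> bool) \<Rightarrow> nat \<Rightarrow> nat \<Rightarrow> nat set" where
  "nbrs E n i = {j. j < n \<and> E i j}"

definition num_edges :: "(nat \<Rightarrow> nat \<Rightarrow> bool) \<Rightarrow> nat \<Rightarrow> nat" where
  "num_edges E n = card {(i, j). i < j \<and> j < n \<and> E i j}"

definition simple_undirected_graph :: "(nat \<Rightarrow> nat \<Rightarrow> bool) \<Rightarrow> nat \<Rightarrow> bool" where
  "simple_undirected_graph E n \<longleftrightarrow>
     (\<forall>i j. E i j \<longrightarrow> i < n \<and> j < n) \<and> (\<forall>i j. E i j \<longrightarrow> E j i) \<and> (\<forall>i. \<not> E i i)"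

definition graph_connected :: "(nat \<Rightarrow> nat \<Rightarrow> bool) \<Rightarrow> nat \<Rightarrow> bool" where
  "graph_connected E n \<longleftrightarrow> (\<forall>i<n. \<forall>j<n. E\<^sup>*\<^sup>* i j)"

fun bq :: "(nat \<Rightarrow> nat \<Rightarrow> bool) \<Rightarrow> nat \<Rightarrow> real \<Rightarrow> real \<Rightarrow> real \<Rightarrow> real \<Rightarrow> (nat \<Rightarrow> real)
           \<Rightarrow> nat \<Rightarrow> (nat \<Rightarrow> real) \<times> (nat \<Rightarrow> real)" where
  "bq E n a D d \<rho> r 0 = ((\<lambda>_. 0), (\<lambda>_. 0))"
| "bq E n a D d \<rho> r (Suc k) =
    (let (x, \<alpha>) = bq E n a D d \<rho> r k;
         q = (\<lambda>i. quant a D d (x i));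
         x' = (\<lambda>i. (\<rho> * real (card (nbrs E n i)) * q i + \<rho> * (\<Sum>j\<in>nbrs E n i. q j) - \<alpha> i + r i)
                    / (1 + 2 * \<rho> * real (card (nbrs E n i))));
         q' = (\<lambda>i. quant a D d (x' i));
         \<alpha>' = (\<lambda>i. \<alpha> i + \<rho> * (real (card (nbrs E n i)) * q' i - (\<Sum>j\<in>nbrs E n i. q' j)))
     in (x', \<alpha>'))"

definition converges_at :: "(nat \<Rightarrow> nat \<Rightarrow> bool) \<Rightarrow> nat \<Rightarrow> real \<Rightarrow> real \<Rightarrow> real \<Rightarrow> real
    \<Rightarrow> (nat \<Rightarrow> real) \<Rightarrow> real \<Rightarrow> bool" where
  "converges_at E n a D d \<rho> r c \<longleftrightarrow>
     (\<exists>k0. \<forall>k\<ge>k0. \<forall>i<n. quant a D d (fst (bq E n a D d \<rho> r k) i) = c)"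

definition cycles :: "(nat \<Rightarrow> nat \<Rightarrow> bool) \<Rightarrow> nat \<Rightarrow> real \<Rightarrow> real \<Rightarrow> real \<Rightarrow> real
    \<Rightarrow> (nat \<Rightarrow> real) \<Rightarrow> bool" where
  "cycles E n a D d \<rho> r \<longleftrightarrow> \<not> converges_at E n a D d \<rho> r a \<and> \<not> converges_at E n a D d \<rho> r (a + D)"

text \<open>dP1/dP2 (density of P1 w.r.t. P2) as a real function, and its log\<close>
definition lr :: "'a measure \<Rightarrow> 'a measure \<Rightarrow> 'a \<Rightarrow> real" where
  "lr P1 P2 s = enn2real (RN_deriv P2 P1 s)"

definition llr :: "'a measure \<Rightarrow> 'a measure \<Rightarrow> 'a \<Rightarrow> real" where
  "llr P1 P2 s = ln (lr P1 P2 s)"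

definition A_event :: "(nat \<Rightarrow> nat \<Rightarrow> bool) \<Rightarrow> nat \<Rightarrow> 'a measure \<Rightarrow> 'a measure \<Rightarrow> real \<Rightarrow> real
    \<Rightarrow> (nat \<Rightarrow> 'a) set" where
  "A_event E n P1 P2 \<tau> \<rho> =
     {y \<in> space (PiM {..<n} (\<lambda>_. P2)).
        cycles E n (\<tau> - 1) 2 1 \<rho> (\<lambda>i. llr P1 P2 (y i))
      \<or> converges_at E n (\<tau> - 1) 2 1 \<rho> (\<lambda>i. llr P1 P2 (y i)) (\<tau> + 1)}"

definition A_star :: "nat \<Rightarrow> 'a measure \<Rightarrow> 'a measure \<Rightarrow> real \<Rightarrow> (nat \<Rightarrow> 'a) set" where
  "A_star n P1 P2 \<tau> =
     {y \<in> space (PiM {..<n} (\<lambda>_. P2)). (1 / real n) * ln (\<Prod>i<n. lr P1 P2 (y i)) > \<tau>}"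

definition F_dist :: "'a measure \<Rightarrow> nat \<Rightarrow> 'a measure \<Rightarrow> 'a measure \<Rightarrow> real \<Rightarrow> real" where
  "F_dist Q n P1 P2 t = measure (PiM {..<n} (\<lambda>_. Q))
     {y \<in> space (PiM {..<n} (\<lambda>_. Q)). (1 / real n) * ln (\<Prod>i<n. lr P1 P2 (y i)) \<le> t}"

end

theory Submission
  imports Defs
begin

text \<open>With threshold \<open>\<tau>\<close> the quantizer only reports on which side of \<open>\<tau>\<close> an iterate lies.
  The slack \<open>r\<^sub>i - \<tau> - \<alpha>\<^sub>i\<^sup>k\<close> determines that side for \<open>x\<^sub>i\<^sup>k\<^sup>+\<^sup>1\<close> up to an error
  \<open>2\<rho>d\<^sub>i\<close>, and the dual update moves it by \<open>2\<rho>\<close> per disagreeing neighbour: down at a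
  high node, up at a low one. The duals sum to zero, so the slacks always sum to
  \<open>\<Sum>\<^sub>i r\<^sub>i - n\<tau>\<close>. If every node is eventually low, each slack is at most \<open>2\<rho>d\<^sub>i\<close>,
  whence \<open>\<Sum>\<^sub>i r\<^sub>i \<le> n\<tau> + 4\<rho>m\<close>. If \<open>\<Sum>\<^sub>i r\<^sub>i \<le> n\<tau> - 4\<rho>\<Sum>\<^sub>i d\<^sub>i\<close>, then either some node is
  eventually low, and then by connectivity all are (a low node with a frequently high
  neighbour would gain \<open>2\<rho>\<close> infinitely often, but its slack is bounded), or every node is
  high infinitely often, after which its slack stays above \<open>-4\<rho>d\<^sub>i\<close>, contradicting the sum.
  Dividing by \<open>n\<close>, the event \<open>\<A>\<^sub>n\<close> is sandwiched (almost surely) between two superlevel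
  sets of the normalised log-likelihood ratio, and continuity of \<open>F\<^sub>Q\<close> squeezes the limit.\<close>

lemma quant_threshold: "quant (\<tau> - 1) 2 1 x = (if x \<le> \<tau> then \<tau> - 1 else \<tau> + 1)"
  by (simp add: quant_def)

lemma fst_bq_Suc:
  "fst (bq E n a D d \<rho> r (Suc k)) i =
     (\<rho> * real (card (nbrs E n i)) * quant a D d (fst (bq E n a D d \<rho> r k) i)
      + \<rho> * (\<Sum>j\<in>nbrs E n i. quant a D d (fst (bq E n a D d \<rho> r k) j))
      - snd (bq E n a D d \<rho> r k) i + r i) / (1 + 2 * \<rho> * real (card (nbrs E n i)))"
  by (cases "bq E n a D d \<rho> r k") (simp add: Let_def)

lemma snd_bq_Suc:
  "snd (bq E n a D d \<rho> r (Suc k)) i = snd (bq E n a D d \<rho> r k) i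
     + \<rho> * (real (card (nbrs E n i)) * quant a D d (fst (bq E n a D d \<rho> r (Suc k)) i)
            - (\<Sum>j\<in>nbrs E n i. quant a D d (fst (bq E n a D d \<rho> r (Suc k)) j)))"
  by (cases "bq E n a D d \<rho> r k") (simp add: Let_def)

lemma finite_nbrs [simp]: "finite (nbrs E n i)"
  unfolding nbrs_def by auto

lemma sum_card_nbrs_le_square: "(\<Sum>i<n. card (nbrs E n i)) \<le> n * n"
proof -
  have "card (nbrs E n i) \<le> n" for i
    using card_mono[of "{..<n}" "nbrs E n i"] by (auto simp: nbrs_def)
  then have "(\<Sum>i<n. card (nbrs E n i)) \<le> (\<Sum>i<n. n)" by (intro sum_mono)
  then show ?thesis by simp
qed

lemma sum_card_nbrs_le_num_edges:
  assumes "simple_undirected_graph E n"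
  shows "(\<Sum>i<n. card (nbrs E n i)) \<le> 2 * num_edges E n"
proof -
  let ?P = "{(i, j). i < n \<and> j < n \<and> E i j}"
  let ?L = "{(i, j). i < j \<and> j < n \<and> E i j}"
  have fin: "finite ?L" by (rule finite_subset[of _ "{..<n} \<times> {..<n}"]) auto
  have "Sigma {..<n} (nbrs E n) = ?P" by (auto simp: nbrs_def)
  then have "(\<Sum>i<n. card (nbrs E n i)) = card ?P"
    using card_SigmaI[of "{..<n}" "nbrs E n"] by simp
  also have "?P \<subseteq> ?L \<union> prod.swap ` ?L"
  proof
    fix p assume "p \<in> ?P"
    then obtain i j where p: "p = (i, j)" "i < n" "j < n" "E i j" by auto
    have "i \<noteq> j" "E j i" using assms p unfolding simple_undirected_graph_def by auto
    then show "p \<in> ?L \<union> prod.swap ` ?L"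
    proof (cases "i < j")
      case False
      then have "(j, i) \<in> ?L" using p \<open>i \<noteq> j\<close> \<open>E j i\<close> by auto
      then show ?thesis using p by (auto intro: image_eqI[of _ _ "(j, i)"])
    qed (use p in auto)
  qed
  then have "card ?P \<le> card (?L \<union> prod.swap ` ?L)" using fin by (intro card_mono) auto
  also have "\<dots> \<le> card ?L + card (prod.swap ` ?L)" by (rule card_Un_le)
  also have "\<dots> \<le> 2 * num_edges E n"
    using card_image_le[OF fin, of prod.swap] unfolding num_edges_def by simp
  finally show ?thesis .
qed

lemma sum_nbrs_diff_eq_0:
  fixes f :: "nat \<Rightarrow> real"
  assumes "symp E"
  shows "(\<Sum>i<n. \<Sum>j\<in>nbrs E n i. f i - f j) = 0"
proof -
  have sym: "E i j = E j i" for i j using assms by (auto simp: symp_def)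
  have nbrs_sum: "(\<Sum>j\<in>nbrs E n i. g j) = (\<Sum>j<n. if E i j then g j else 0)"
    for i and g :: "nat \<Rightarrow> real"
  proof -
    have "nbrs E n i = {..<n} \<inter> {j. E i j}" by (auto simp: nbrs_def)
    then show ?thesis by (simp add: sum.If_cases)
  qed
  have "(\<Sum>i<n. \<Sum>j\<in>nbrs E n i. f i - f j)
      = (\<Sum>i<n. \<Sum>j<n. (if E i j then f i else 0) - (if E i j then f j else 0))"
    by (simp add: nbrs_sum) (intro sum.cong, auto)
  also have "\<dots> = (\<Sum>i<n. \<Sum>j<n. if E i j then f i else 0) - (\<Sum>i<n. \<Sum>j<n. if E i j then f j else 0)"
    by (simp add: sum_subtractf)
  also have "(\<Sum>i<n. \<Sum>j<n. if E i j then f j else 0) = (\<Sum>j<n. \<Sum>i<n. if E i j then f j else 0)"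
    by (rule sum.swap)
  also have "\<dots> = (\<Sum>i<n. \<Sum>j<n. if E i j then f i else 0)"
    using sym by simp
  finally show ?thesis by simp
qed

lemma converges_at_unique:
  assumes "0 < n" and "converges_at E n a D d \<rho> r c" and "converges_at E n a D d \<rho> r c'"
  shows "c = c'"
proof -
  obtain k1 k2 where
    k1: "\<forall>k\<ge>k1. \<forall>i<n. quant a D d (fst (bq E n a D d \<rho> r k) i) = c" and
    k2: "\<forall>k\<ge>k2. \<forall>i<n. quant a D d (fst (bq E n a D d \<rho> r k) i) = c'"
    using assms(2,3) unfolding converges_at_def by blast
  let ?v = "quant a D d (fst (bq E n a D d \<rho> r (max k1 k2)) 0)"
  have "?v = c" using k1[rule_format, of "max k1 k2" 0] assms(1) by simp
  moreover have "?v = c'" using k2[rule_format, of "max k1 k2" 0] assms(1) by simp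
  ultimately show ?thesis by simp
qed

lemma sum_minus_const: "(\<Sum>i<n. r i - c) = (\<Sum>i<n. r i) - real n * (c :: real)"
  by (simp add: sum_subtractf)

locale bq_cadmm =
  fixes E :: "nat \<Rightarrow> nat \<Rightarrow> bool" and n :: nat and \<rho> \<tau> :: real and r :: "nat \<Rightarrow> real"
  assumes rho_pos: "0 < \<rho>"
begin

definition x :: "nat \<Rightarrow> nat \<Rightarrow> real" where "x k = fst (bq E n (\<tau> - 1) 2 1 \<rho> r k)"
definition \<alpha> :: "nat \<Rightarrow> nat \<Rightarrow> real" where "\<alpha> k = snd (bq E n (\<tau> - 1) 2 1 \<rho> r k)"
definition q :: "nat \<Rightarrow> nat \<Rightarrow> real" where "q k i = quant (\<tau> - 1) 2 1 (x k i)"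
definition deg :: "nat \<Rightarrow> real" where "deg i = real (card (nbrs E n i))"

definition w :: "nat \<Rightarrow> nat \<Rightarrow> real" where "w k i = r i - \<tau> - \<alpha> k i"

definition eventually_low :: bool where
  "eventually_low \<longleftrightarrow> (\<forall>\<^sub>F k in sequentially. \<forall>i<n. x k i \<le> \<tau>)"

lemma q_eq: "q k i = (if x k i \<le> \<tau> then \<tau> - 1 else \<tau> + 1)"
  by (simp add: q_def quant_threshold)

lemma deg_nonneg [simp]: "0 \<le> deg i"
  by (simp add: deg_def)

lemma x_Suc: "x (Suc k) i =
    (\<rho> * deg i * q k i + \<rho> * (\<Sum>j\<in>nbrs E n i. q k j) - \<alpha> k i + r i) / (1 + 2 * \<rho> * deg i)"
  unfolding x_def \<alpha>_def q_def deg_def fst_bq_Suc ..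

lemma w_Suc: "w (Suc k) i = w k i - \<rho> * (\<Sum>j\<in>nbrs E n i. q (Suc k) i - q (Suc k) j)"
  unfolding w_def \<alpha>_def snd_bq_Suc by (fold x_def q_def) (simp add: sum_subtractf deg_def)

lemma denominator_pos: "0 < 1 + 2 * \<rho> * deg i"
  using rho_pos by (intro add_pos_nonneg mult_nonneg_nonneg) auto

lemma x_Suc_threshold_bound:
  "\<bar>(x (Suc k) i - \<tau>) * (1 + 2 * \<rho> * deg i) - w k i\<bar> \<le> 2 * \<rho> * deg i"
proof -
  let ?A = "deg i * (q k i - \<tau>) + (\<Sum>j\<in>nbrs E n i. q k j - \<tau>)"
  have "1 + 2 * \<rho> * deg i \<noteq> 0" using denominator_pos[of i] by simp
  then have eq: "(x (Suc k) i - \<tau>) * (1 + 2 * \<rho> * deg i) - w k i = \<rho> * ?A"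
    unfolding x_Suc w_def by (simp add: field_simps sum_subtractf deg_def)
  have dist_q: "\<bar>q k j - \<tau>\<bar> = 1" for j by (simp add: q_eq)
  have "\<bar>deg i * (q k i - \<tau>)\<bar> = deg i" by (simp add: abs_mult dist_q)
  moreover have "\<bar>\<Sum>j\<in>nbrs E n i. q k j - \<tau>\<bar> \<le> deg i"
    using sum_abs[of "\<lambda>j. q k j - \<tau>" "nbrs E n i"] by (simp add: dist_q deg_def)
  ultimately have "\<bar>?A\<bar> \<le> 2 * deg i"
    using abs_triangle_ineq[of "deg i * (q k i - \<tau>)" "\<Sum>j\<in>nbrs E n i. q k j - \<tau>"] by linarith
  then have "\<rho> * \<bar>?A\<bar> \<le> \<rho> * (2 * deg i)" using rho_pos by (intro mult_left_mono) auto
  then show ?thesis unfolding eq using rho_pos by (simp add: abs_mult)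
qed

lemma w_gt_if_high:
  assumes "\<tau> < x (Suc k) i"
  shows "- 2 * \<rho> * deg i < w k i"
proof -
  have "0 < (x (Suc k) i - \<tau>) * (1 + 2 * \<rho> * deg i)"
    using assms denominator_pos[of i] by simp
  then show ?thesis using x_Suc_threshold_bound[of k i] by linarith
qed

lemma w_le_if_low:
  assumes "x (Suc k) i \<le> \<tau>"
  shows "w k i \<le> 2 * \<rho> * deg i"
proof -
  have "(x (Suc k) i - \<tau>) * (1 + 2 * \<rho> * deg i) \<le> 0"
    using assms denominator_pos[of i] by (simp add: mult_nonpos_nonneg)
  then show ?thesis using x_Suc_threshold_bound[of k i] by linarith
qed

lemma w_Suc_if_high:
  assumes "\<tau> < x (Suc k) i"
  shows "w k i - 2 * \<rho> * deg i \<le> w (Suc k) i" and "w (Suc k) i \<le> w k i"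
proof -
  let ?S = "\<Sum>j\<in>nbrs E n i. q (Suc k) i - q (Suc k) j"
  have "0 \<le> ?S"
    using assms by (intro sum_nonneg) (simp add: q_eq)
  moreover have "?S \<le> deg i * 2"
    unfolding deg_def using assms by (intro sum_bounded_above) (simp add: q_eq)
  ultimately have "0 \<le> \<rho> * ?S" "\<rho> * ?S \<le> \<rho> * (deg i * 2)"
    using rho_pos by (simp_all add: mult_left_mono)
  then show "w k i - 2 * \<rho> * deg i \<le> w (Suc k) i" and "w (Suc k) i \<le> w k i"
    unfolding w_Suc by linarith+
qed

lemma w_Suc_if_low:
  assumes "x (Suc k) i \<le> \<tau>"
  shows "w k i \<le> w (Suc k) i" and "w (Suc k) i \<le> w k i + 2 * \<rho> * deg i"
proof -
  let ?S = "\<Sum>j\<in>nbrs E n i. q (Suc k) i - q (Suc k) j"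
  have "?S \<le> 0"
    using assms by (intro sum_nonpos) (simp add: q_eq)
  moreover have "deg i * - 2 \<le> ?S"
    unfolding deg_def using assms by (intro sum_bounded_below) (simp add: q_eq)
  ultimately have "\<rho> * ?S \<le> 0" "\<rho> * (deg i * - 2) \<le> \<rho> * ?S"
    using rho_pos by (simp add: mult_nonneg_nonpos, intro mult_left_mono) auto
  then show "w k i \<le> w (Suc k) i" and "w (Suc k) i \<le> w k i + 2 * \<rho> * deg i"
    unfolding w_Suc by linarith+
qed

lemma w_Suc_if_low_nbr_high:
  assumes "x (Suc k) i \<le> \<tau>" and "j \<in> nbrs E n i" and "\<tau> < x (Suc k) j"
  shows "w k i + 2 * \<rho> \<le> w (Suc k) i"
proof -
  have "(\<Sum>j\<in>nbrs E n i. q (Suc k) i - q (Suc k) j)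
      = (q (Suc k) i - q (Suc k) j) + (\<Sum>j\<in>nbrs E n i - {j}. q (Suc k) i - q (Suc k) j)"
    using assms(2) by (simp add: sum.remove)
  also have "\<dots> \<le> - 2 + 0"
    using assms by (intro add_mono sum_nonpos) (auto simp: q_eq)
  finally have "\<rho> * (\<Sum>j\<in>nbrs E n i. q (Suc k) i - q (Suc k) j) \<le> \<rho> * - 2"
    using rho_pos by (intro mult_left_mono) auto
  then show ?thesis unfolding w_Suc by linarith
qed

lemma w_0: "w 0 i = r i - \<tau>"
  by (simp add: w_def \<alpha>_def)

lemma w_le_max: "w k i \<le> max (r i - \<tau>) (4 * \<rho> * deg i)"
proof (induction k)
  case 0
  then show ?case by (simp add: w_0)
next
  case (Suc k)
  show ?case
  proof (cases "\<tau> < x (Suc k) i")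
    case True
    with Suc show ?thesis using w_Suc_if_high(2)[of k i] by linarith
  next
    case False
    then have "x (Suc k) i \<le> \<tau>" by simp
    then show ?thesis using w_le_if_low[of k i] w_Suc_if_low(2)[of k i] by linarith
  qed
qed

lemma w_gt_after_high:
  assumes "\<tau> < x (Suc u) i" and "Suc u \<le> t"
  shows "- 4 * \<rho> * deg i < w t i"
  using assms(2)
proof (induction t rule: dec_induct)
  case base
  show ?case using w_gt_if_high[OF assms(1)] w_Suc_if_high(1)[OF assms(1)] by linarith
next
  case (step t)
  show ?case
  proof (cases "\<tau> < x (Suc t) i")
    case True
    show ?thesis using w_gt_if_high[OF True] w_Suc_if_high(1)[OF True] by linarith
  next
    case False
    then have "x (Suc t) i \<le> \<tau>" by simp
    then show ?thesis using step.IH w_Suc_if_low(1)[of t i] by linarith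
  qed
qed

lemma w_mono_while_low:
  assumes "\<forall>k\<ge>T. x k i \<le> \<tau>" and "T \<le> k" and "k \<le> k'"
  shows "w k i \<le> w k' i"
  using assms(3)
proof (induction k' rule: dec_induct)
  case (step t)
  then have "x (Suc t) i \<le> \<tau>" using assms(1,2) by simp
  then show ?case using step.IH w_Suc_if_low(1)[of t i] by linarith
qed simp

lemma w_unbounded_if_nbr_frequently_high:
  assumes low: "\<forall>k\<ge>T. x k i \<le> \<tau>" and j: "j \<in> nbrs E n i" and high: "\<forall>K. \<exists>k\<ge>K. \<tau> < x k j"
  shows "\<exists>k\<ge>T. w T i + 2 * \<rho> * real N \<le> w k i"
proof (induction N)
  case (Suc N)
  then obtain k where k: "T \<le> k" "w T i + 2 * \<rho> * real N \<le> w k i" by blast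
  obtain k'' where k'': "Suc k \<le> k''" "\<tau> < x k'' j" using high by blast
  then obtain k' where k': "k'' = Suc k'" "k \<le> k'" by (cases k'') auto
  have "x (Suc k') i \<le> \<tau>" using low k k' by simp
  then have "w k' i + 2 * \<rho> \<le> w (Suc k') i"
    using w_Suc_if_low_nbr_high[OF _ j] k'' k' by simp
  moreover have "w k i \<le> w k' i" using w_mono_while_low[OF low k(1) k'(2)] .
  ultimately show ?case using k k' by (intro exI[of _ "Suc k'"]) (auto simp: algebra_simps)
qed auto

lemma eventually_low_nbr:
  assumes graph: "simple_undirected_graph E n" and "E i j"
    and "\<forall>\<^sub>F k in sequentially. x k i \<le> \<tau>"
  shows "\<forall>\<^sub>F k in sequentially. x k j \<le> \<tau>"
proof (rule ccontr)
  assume "\<not> ?thesis"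
  then have high: "\<forall>K. \<exists>k\<ge>K. \<tau> < x k j" by (auto simp: eventually_sequentially not_le)
  have j: "j \<in> nbrs E n i" using graph \<open>E i j\<close> unfolding simple_undirected_graph_def nbrs_def by auto
  obtain T where low: "\<forall>k\<ge>T. x k i \<le> \<tau>" using assms(3) by (auto simp: eventually_sequentially)
  obtain N :: nat where "(max (r i - \<tau>) (4 * \<rho> * deg i) - w T i) / (2 * \<rho>) < N"
    using reals_Archimedean2 by blast
  then have "max (r i - \<tau>) (4 * \<rho> * deg i) - w T i < 2 * \<rho> * real N"
    using rho_pos by (subst (asm) pos_divide_less_eq) (auto simp: mult.commute)
  moreover obtain k where "w T i + 2 * \<rho> * real N \<le> w k i"
    using w_unbounded_if_nbr_frequently_high[OF low j high] by blast
  ultimately show False using w_le_max[of k i] by linarith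
qed

lemma eventually_low_rtranclp:
  assumes "simple_undirected_graph E n" and "E\<^sup>*\<^sup>* i j"
    and "\<forall>\<^sub>F k in sequentially. x k i \<le> \<tau>"
  shows "\<forall>\<^sub>F k in sequentially. x k j \<le> \<tau>"
  using assms(2,3)
proof (induction rule: rtranclp_induct)
  case (step j j')
  then show ?case using eventually_low_nbr[OF assms(1), of j j'] by simp
qed

lemma sum_w:
  assumes "symp E"
  shows "(\<Sum>i<n. w k i) = (\<Sum>i<n. r i - \<tau>)"
proof (induction k)
  case 0
  then show ?case by (simp add: w_0)
next
  case (Suc k)
  define S where "S i = (\<Sum>j\<in>nbrs E n i. q (Suc k) i - q (Suc k) j)" for i
  have "(\<Sum>i<n. w (Suc k) i) = (\<Sum>i<n. w k i - \<rho> * S i)"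
    by (simp add: w_Suc S_def)
  also have "\<dots> = (\<Sum>i<n. w k i) - \<rho> * (\<Sum>i<n. S i)"
    by (simp add: sum_subtractf sum_distrib_left)
  finally show ?case using Suc sum_nbrs_diff_eq_0[OF assms, where f = "q (Suc k)"] by (simp add: S_def)
qed

lemma sum_r_le_if_eventually_low:
  assumes "symp E" and eventually_low
  shows "(\<Sum>i<n. r i - \<tau>) \<le> 2 * \<rho> * (\<Sum>i<n. deg i)"
proof -
  obtain K where "\<forall>k\<ge>K. \<forall>i<n. x k i \<le> \<tau>"
    using \<open>eventually_low\<close> unfolding eventually_low_def eventually_sequentially by blast
  then have "(\<Sum>i<n. w K i) \<le> (\<Sum>i<n. 2 * \<rho> * deg i)"
    by (intro sum_mono w_le_if_low) simp
  then show ?thesis by (simp add: sum_w[OF assms(1)] sum_distrib_left)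
qed

lemma eventually_low_if_sum_r_le:
  assumes graph: "simple_undirected_graph E n" and conn: "graph_connected E n" and "0 < n"
    and sum_le: "(\<Sum>i<n. r i - \<tau>) \<le> - 4 * \<rho> * (\<Sum>i<n. deg i)"
  shows eventually_low
proof (cases "\<exists>i<n. \<forall>\<^sub>F k in sequentially. x k i \<le> \<tau>")
  case True
  then obtain i where "i < n" "\<forall>\<^sub>F k in sequentially. x k i \<le> \<tau>" by blast
  then have "\<forall>j\<in>{..<n}. \<forall>\<^sub>F k in sequentially. x k j \<le> \<tau>"
    using conn eventually_low_rtranclp[OF graph] unfolding graph_connected_def by blast
  then have "\<forall>\<^sub>F k in sequentially. \<forall>j\<in>{..<n}. x k j \<le> \<tau>"
    by (rule eventually_ball_finite[OF finite_lessThan])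
  then show ?thesis
    unfolding eventually_low_def by (rule eventually_mono) simp
next
  case False
  have "\<forall>i\<in>{..<n}. \<forall>\<^sub>F t in sequentially. - 4 * \<rho> * deg i < w t i"
  proof
    fix i assume "i \<in> {..<n}"
    with False obtain k where "1 \<le> k" "\<tau> < x k i"
      by (auto simp: eventually_sequentially not_le)
    then obtain u where "\<tau> < x (Suc u) i" by (cases k) auto
    then show "\<forall>\<^sub>F t in sequentially. - 4 * \<rho> * deg i < w t i"
      unfolding eventually_sequentially using w_gt_after_high by blast
  qed
  then have "\<forall>\<^sub>F t in sequentially. \<forall>i\<in>{..<n}. - 4 * \<rho> * deg i < w t i"
    by (rule eventually_ball_finite[OF finite_lessThan])
  then obtain t where "\<forall>i\<in>{..<n}. - 4 * \<rho> * deg i < w t i"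
    by (auto simp: eventually_sequentially)
  then have "(\<Sum>i<n. - 4 * \<rho> * deg i) < (\<Sum>i<n. w t i)"
    using \<open>0 < n\<close> by (intro sum_strict_mono) auto
  moreover have "symp E" using graph unfolding simple_undirected_graph_def symp_def by blast
  ultimately show ?thesis using sum_le by (simp add: sum_w sum_distrib_left)
qed


lemma sum_deg: "(\<Sum>i<n. deg i) = real (\<Sum>i<n. card (nbrs E n i))"
  by (simp add: deg_def)

lemma converges_at_low_iff: "converges_at E n (\<tau> - 1) 2 1 \<rho> r (\<tau> - 1) \<longleftrightarrow> eventually_low"
  unfolding converges_at_def eventually_low_def eventually_sequentially x_def quant_threshold
  by auto

lemma cycles_or_converges_high_iff:
  assumes "0 < n"
  shows "cycles E n (\<tau> - 1) 2 1 \<rho> r \<or> converges_at E n (\<tau> - 1) 2 1 \<rho> r (\<tau> + 1)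
    \<longleftrightarrow> \<not> eventually_low"
proof -
  have top: "\<tau> - 1 + 2 = \<tau> + 1" by simp
  show ?thesis
    unfolding cycles_def top converges_at_low_iff[symmetric]
    using converges_at_unique[OF assms, of E "\<tau> - 1" 2 1 \<rho> r "\<tau> + 1" "\<tau> - 1"] by auto
qed

lemma not_eventually_low_if_sum_gt:
  assumes graph: "simple_undirected_graph E n"
    and sum_gt: "real n * \<tau> + 4 * \<rho> * real (num_edges E n) < (\<Sum>i<n. r i)"
  shows "\<not> eventually_low"
proof
  assume eventually_low
  have "symp E" using graph unfolding simple_undirected_graph_def symp_def by blast
  have "(\<Sum>i<n. r i - \<tau>) \<le> 2 * \<rho> * (\<Sum>i<n. deg i)"
    using sum_r_le_if_eventually_low[OF \<open>symp E\<close> \<open>eventually_low\<close>] .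
  moreover have "\<rho> * (\<Sum>i<n. deg i) \<le> \<rho> * (2 * real (num_edges E n))"
    using sum_card_nbrs_le_num_edges[OF graph] rho_pos unfolding sum_deg
    by (intro mult_left_mono) linarith+
  ultimately show False using sum_gt sum_minus_const[where r = r and n = n and c = \<tau>] by linarith
qed

lemma sum_gt_if_not_eventually_low:
  assumes "simple_undirected_graph E n" and "graph_connected E n" and "0 < n"
    and "\<not> eventually_low"
  shows "real n * \<tau> - 4 * \<rho> * (real n * real n) < (\<Sum>i<n. r i)"
proof -
  have "\<not> (\<Sum>i<n. r i - \<tau>) \<le> - 4 * \<rho> * (\<Sum>i<n. deg i)"
    using eventually_low_if_sum_r_le[OF assms(1-3)] assms(4) by blast
  moreover have "(\<Sum>i<n. deg i) \<le> real n * real n"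
    using of_nat_mono[OF sum_card_nbrs_le_square[of E n]] unfolding sum_deg by simp
  then have "\<rho> * (\<Sum>i<n. deg i) \<le> \<rho> * (real n * real n)"
    using rho_pos by (intro mult_left_mono) auto
  ultimately show ?thesis using sum_minus_const[where r = r and n = n and c = \<tau>] by linarith
qed

end


lemma borel_measurable_quant [measurable]: "quant a D d \<in> borel_measurable borel"
  unfolding quant_def by measurable

lemma bq_measurable:
  assumes "\<And>i. (\<lambda>y. f y i) \<in> borel_measurable M"
  shows "(\<lambda>y. fst (bq E n a D d \<rho> (f y) k) i) \<in> borel_measurable M
    \<and> (\<lambda>y. snd (bq E n a D d \<rho> (f y) k) i) \<in> borel_measurable M"
proof (induction k arbitrary: i)
  case 0
  then show ?case by simp
next
  case (Suc k)
  have [measurable]: "(\<lambda>y. fst (bq E n a D d \<rho> (f y) k) j) \<in> borel_measurable M"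
    "(\<lambda>y. snd (bq E n a D d \<rho> (f y) k) j) \<in> borel_measurable M"
    "(\<lambda>y. f y j) \<in> borel_measurable M" for j
    using Suc assms by blast+
  have fst_Suc [measurable]: "(\<lambda>y. fst (bq E n a D d \<rho> (f y) (Suc k)) j) \<in> borel_measurable M" for j
    unfolding fst_bq_Suc by measurable
  have "(\<lambda>y. snd (bq E n a D d \<rho> (f y) (Suc k)) i) \<in> borel_measurable M"
    unfolding snd_bq_Suc by measurable
  with fst_Suc show ?case by blast
qed

lemma sets_eventually_low:
  assumes "0 < \<rho>" and "\<And>i. (\<lambda>y. f y i) \<in> borel_measurable M"
  shows "{y \<in> space M. bq_cadmm.eventually_low E n \<rho> \<tau> (f y)} \<in> sets M"
proof -
  have [measurable]: "(\<lambda>y. fst (bq E n (\<tau> - 1) 2 1 \<rho> (f y) k) i) \<in> borel_measurable M" for k i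
    using bq_measurable[where f = f and M = M, OF assms(2)] by blast
  interpret bq_cadmm E n \<rho> \<tau> "f y" for y by unfold_locales (rule assms(1))
  have "{y \<in> space M. bq_cadmm.eventually_low E n \<rho> \<tau> (f y)}
      = {y \<in> space M. \<exists>K. \<forall>k\<ge>K. \<forall>i<n. fst (bq E n (\<tau> - 1) 2 1 \<rho> (f y) k) i \<le> \<tau>}"
    by (simp add: eventually_low_def x_def eventually_sequentially)
  also have "\<dots> \<in> sets M" by measurable
  finally show ?thesis .
qed

lemma measurable_PiM_component_comp:
  assumes "h \<in> borel_measurable Q"
  shows "(\<lambda>y. h (y i)) \<in> borel_measurable (PiM I (\<lambda>_. Q))"
proof (cases "i \<in> I")
  case True
  then show ?thesis
    using measurable_compose[OF measurable_component_singleton[of i I "\<lambda>_. Q"] assms] by simp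
next
  case False
  text \<open>Outside the index set every point of the product space is \<open>undefined\<close>.\<close>
  then have "\<And>y. y \<in> space (PiM I (\<lambda>_. Q)) \<Longrightarrow> h (y i) = h undefined"
    by (auto simp: space_PiM PiE_def extensional_def)
  then show ?thesis by (subst measurable_cong[where g = "\<lambda>_. h undefined"]) auto
qed

lemma
  assumes "sets Q = sets P2"
  shows borel_measurable_lr: "lr P1 P2 \<in> borel_measurable Q"
    and borel_measurable_llr: "llr P1 P2 \<in> borel_measurable Q"
proof -
  have "RN_deriv P2 P1 \<in> borel_measurable Q"
    unfolding measurable_cong_sets[OF assms refl] by (rule borel_measurable_RN_deriv)
  then show "lr P1 P2 \<in> borel_measurable Q" "llr P1 P2 \<in> borel_measurable Q"
    unfolding llr_def lr_def by measurable
qed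

lemma
  assumes "prob_space P1" and "prob_space P2" and "sets P1 = sets P2"
    and "absolutely_continuous P1 P2" and "absolutely_continuous P2 P1"
  shows AE_lr_nonzero_P2: "AE x in P2. lr P1 P2 x \<noteq> 0"
    and AE_lr_nonzero_P1: "AE x in P1. lr P1 P2 x \<noteq> 0"
proof -
  interpret p1: prob_space P1 by fact
  interpret p2: prob_space P2 by fact
  have fin2: "AE x in P2. RN_deriv P2 P1 x \<noteq> \<infinity>"
    by (rule p2.RN_deriv_finite[OF p1.sigma_finite_measure_axioms assms(5,3)])
  have "AE x in density P2 (RN_deriv P2 P1). RN_deriv P2 P1 x \<noteq> 0"
    by (subst AE_density) auto
  then have pos1: "AE x in P1. RN_deriv P2 P1 x \<noteq> 0"
    unfolding p2.density_RN_deriv[OF assms(5,3)] .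
  have pos2: "AE x in P2. RN_deriv P2 P1 x \<noteq> 0"
    by (rule absolutely_continuous_AE[OF assms(3)[symmetric] assms(4) pos1])
  have fin1: "AE x in P1. RN_deriv P2 P1 x \<noteq> \<infinity>"
    by (rule absolutely_continuous_AE[OF assms(3,5) fin2])
  show "AE x in P2. lr P1 P2 x \<noteq> 0" using fin2 pos2
    by eventually_elim (auto simp: lr_def enn2real_eq_0_iff)
  show "AE x in P1. lr P1 P2 x \<noteq> 0" using fin1 pos1
    by eventually_elim (auto simp: lr_def enn2real_eq_0_iff)
qed

definition avg_llr :: "nat \<Rightarrow> 'a measure \<Rightarrow> 'a measure \<Rightarrow> (nat \<Rightarrow> 'a) \<Rightarrow> real" where
  "avg_llr n P1 P2 y = 1 / real n * ln (\<Prod>i<n. lr P1 P2 (y i))"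

lemma avg_llr_eq_sum_llr:
  assumes "\<forall>i<n. lr P1 P2 (y i) \<noteq> 0"
  shows "avg_llr n P1 P2 y = (\<Sum>i<n. llr P1 P2 (y i)) / real n"
proof -
  have "\<forall>i<n. 0 < lr P1 P2 (y i)"
    using assms by (simp add: lr_def order.not_eq_order_implies_strict)
  then show ?thesis unfolding avg_llr_def llr_def by (subst ln_prod) auto
qed

lemma borel_measurable_avg_llr:
  assumes "sets Q = sets P2"
  shows "avg_llr n P1 P2 \<in> borel_measurable (PiM {..<n} (\<lambda>_. Q))"
proof -
  have [measurable]: "(\<lambda>y. lr P1 P2 (y i)) \<in> borel_measurable (PiM {..<n} (\<lambda>_. Q))" for i
    by (rule measurable_PiM_component_comp[OF borel_measurable_lr[OF assms]])
  show ?thesis unfolding avg_llr_def by measurable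
qed

lemma measure_avg_llr_gt:
  assumes "prob_space Q" and "sets Q = sets P2"
  shows "measure (PiM {..<n} (\<lambda>_. Q)) {y \<in> space (PiM {..<n} (\<lambda>_. Q)). t < avg_llr n P1 P2 y}
    = 1 - F_dist Q n P1 P2 t"
proof -
  let ?M = "PiM {..<n} (\<lambda>_. Q)"
  interpret prob_space ?M by (rule prob_space_PiM) (use assms(1) in auto)
  have [measurable]: "avg_llr n P1 P2 \<in> borel_measurable ?M"
    by (rule borel_measurable_avg_llr[OF assms(2)])
  have "{y \<in> space ?M. avg_llr n P1 P2 y \<le> t} \<in> sets ?M" by measurable
  moreover have "{y \<in> space ?M. t < avg_llr n P1 P2 y} = space ?M - {y \<in> space ?M. avg_llr n P1 P2 y \<le> t}"
    by auto
  ultimately show ?thesis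
    unfolding F_dist_def avg_llr_def[symmetric] by (simp add: prob_compl)
qed

lemma space_PiM_sets_eq:
  assumes "sets Q = sets P2"
  shows "space (PiM I (\<lambda>_. Q)) = space (PiM I (\<lambda>_. P2))"
  using sets_eq_imp_space_eq[OF assms] by (simp add: space_PiM)

lemma A_star_eq:
  assumes "sets Q = sets P2"
  shows "A_star n P1 P2 \<tau> = {y \<in> space (PiM {..<n} (\<lambda>_. Q)). \<tau> < avg_llr n P1 P2 y}"
  unfolding A_star_def avg_llr_def space_PiM_sets_eq[OF assms] ..

lemma A_event_eq:
  assumes "sets Q = sets P2" and "0 < n" and "0 < \<rho>"
  shows "A_event E n P1 P2 \<tau> \<rho> = {y \<in> space (PiM {..<n} (\<lambda>_. Q)).
    \<not> bq_cadmm.eventually_low E n \<rho> \<tau> (\<lambda>i. llr P1 P2 (y i))}"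
  unfolding A_event_def space_PiM_sets_eq[OF assms(1)]
  using bq_cadmm.cycles_or_converges_high_iff[OF bq_cadmm.intro[OF assms(3)] assms(2)] by simp


lemma sets_A_event:
  assumes "sets Q = sets P2" and "0 < n" and "0 < \<rho>"
  shows "A_event E n P1 P2 \<tau> \<rho> \<in> sets (PiM {..<n} (\<lambda>_. Q))"
proof -
  let ?M = "PiM {..<n} (\<lambda>_. Q)"
  let ?L = "{y \<in> space ?M. bq_cadmm.eventually_low E n \<rho> \<tau> (\<lambda>i. llr P1 P2 (y i))}"
  have "?L \<in> sets ?M"
    using \<open>0 < \<rho>\<close> measurable_PiM_component_comp[OF borel_measurable_llr[OF assms(1)]]
    by (rule sets_eventually_low)
  moreover have "A_event E n P1 P2 \<tau> \<rho> = space ?M - ?L"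
    unfolding A_event_eq[OF assms] by auto
  ultimately show ?thesis by auto
qed

lemma A_event_if_mean_llr_gt:
  assumes "simple_undirected_graph E n" and "0 < n" and "0 < \<rho>"
    and "y \<in> space (PiM {..<n} (\<lambda>_. P2))"
    and "\<tau> + 4 * \<rho> * real (num_edges E n) / real n < (\<Sum>i<n. llr P1 P2 (y i)) / real n"
  shows "y \<in> A_event E n P1 P2 \<tau> \<rho>"
proof -
  have "(\<tau> + 4 * \<rho> * real (num_edges E n) / real n) * real n < (\<Sum>i<n. llr P1 P2 (y i))"
    using assms(2,5) by (simp add: pos_less_divide_eq)
  moreover have "(\<tau> + 4 * \<rho> * real (num_edges E n) / real n) * real n
      = real n * \<tau> + 4 * \<rho> * real (num_edges E n)"
    using \<open>0 < n\<close> by (simp add: field_simps)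
  ultimately show ?thesis
    unfolding A_event_eq[OF refl assms(2,3)]
    using bq_cadmm.not_eventually_low_if_sum_gt[OF bq_cadmm.intro[OF assms(3)] assms(1)] assms(4)
    by auto
qed

lemma mean_llr_gt_if_A_event:
  assumes "simple_undirected_graph E n" and "graph_connected E n" and "0 < n" and "0 < \<rho>"
    and "y \<in> A_event E n P1 P2 \<tau> \<rho>"
  shows "\<tau> - 12 * \<rho> * real n < (\<Sum>i<n. llr P1 P2 (y i)) / real n"
proof -
  have "real n * \<tau> - 4 * \<rho> * (real n * real n) < (\<Sum>i<n. llr P1 P2 (y i))"
    using assms(5) unfolding A_event_eq[OF refl assms(3,4)]
    using bq_cadmm.sum_gt_if_not_eventually_low[OF bq_cadmm.intro[OF assms(4)] assms(1-3)] by auto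
  moreover have "real n * \<tau> - 4 * \<rho> * (real n * real n) = (\<tau> - 4 * \<rho> * real n) * real n"
    by (simp add: algebra_simps)
  moreover have "(\<tau> - 12 * \<rho> * real n) * real n \<le> (\<tau> - 4 * \<rho> * real n) * real n"
    using \<open>0 < \<rho>\<close> by (intro mult_right_mono) auto
  ultimately have "(\<tau> - 12 * \<rho> * real n) * real n < (\<Sum>i<n. llr P1 P2 (y i))"
    by linarith
  then show ?thesis using assms(3) by (simp add: pos_less_divide_eq)
qed

lemma measure_A_event_bounds:
  fixes Q :: "'a measure"
  assumes Q: "prob_space Q" "sets Q = sets P2" "AE x in Q. lr P1 P2 x \<noteq> 0"
    and graph: "simple_undirected_graph E n" and conn: "graph_connected E n"
    and "0 < n" and "0 < \<rho>"
  shows "1 - F_dist Q n P1 P2 (\<tau> + 4 * \<rho> * real (num_edges E n) / real n)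
      \<le> measure (PiM {..<n} (\<lambda>_. Q)) (A_event E n P1 P2 \<tau> \<rho>)"
    and "measure (PiM {..<n} (\<lambda>_. Q)) (A_event E n P1 P2 \<tau> \<rho>)
      \<le> 1 - F_dist Q n P1 P2 (\<tau> - 12 * \<rho> * real n)"
proof -
  let ?M = "PiM {..<n} (\<lambda>_. Q)"
  let ?A = "A_event E n P1 P2 \<tau> \<rho>"
  let ?lower = "\<tau> + 4 * \<rho> * real (num_edges E n) / real n"
  let ?upper = "\<tau> - 12 * \<rho> * real n"
  interpret M: prob_space ?M by (rule prob_space_PiM) (use Q(1) in auto)
  have [measurable]: "avg_llr n P1 P2 \<in> borel_measurable ?M"
    by (rule borel_measurable_avg_llr[OF Q(2)])
  have "AE y in ?M. \<forall>i\<in>{..<n}. lr P1 P2 (y i) \<noteq> 0"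
    by (intro AE_finite_allI AE_PiM_component) (auto simp: Q)
  then have avg: "AE y in ?M. avg_llr n P1 P2 y = (\<Sum>i<n. llr P1 P2 (y i)) / real n"
    by eventually_elim (simp add: avg_llr_eq_sum_llr)
  then have "AE y in ?M. y \<in> {y \<in> space ?M. ?lower < avg_llr n P1 P2 y} \<longrightarrow> y \<in> ?A"
    by eventually_elim
      (auto simp: space_PiM_sets_eq[OF Q(2)] intro: A_event_if_mean_llr_gt[OF graph \<open>0 < n\<close> \<open>0 < \<rho>\<close>])
  then have "measure ?M {y \<in> space ?M. ?lower < avg_llr n P1 P2 y} \<le> measure ?M ?A"
    by (rule M.finite_measure_mono_AE[OF _ sets_A_event[OF Q(2) \<open>0 < n\<close> \<open>0 < \<rho>\<close>]])
  then show "1 - F_dist Q n P1 P2 ?lower \<le> measure ?M ?A"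
    by (simp add: measure_avg_llr_gt[OF Q(1,2)])
  have "AE y in ?M. y \<in> ?A \<longrightarrow> y \<in> {y \<in> space ?M. ?upper < avg_llr n P1 P2 y}"
    using avg
    by eventually_elim
      (auto simp: A_event_def space_PiM_sets_eq[OF Q(2)]
        intro: mean_llr_gt_if_A_event[OF graph conn \<open>0 < n\<close> \<open>0 < \<rho>\<close>])
  then have "measure ?M ?A \<le> measure ?M {y \<in> space ?M. ?upper < avg_llr n P1 P2 y}"
    by (rule M.finite_measure_mono_AE) measurable
  then show "measure ?M ?A \<le> 1 - F_dist Q n P1 P2 ?upper"
    by (simp add: measure_avg_llr_gt[OF Q(1,2)])
qed

lemma tendsto_sandwich_isCont:
  fixes F :: "real \<Rightarrow> real"
  assumes "isCont F t" and "(f \<longlongrightarrow> t) L" and "(h \<longlongrightarrow> t) L"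
    and "\<forall>\<^sub>F x in L. F (f x) \<le> g x" and "\<forall>\<^sub>F x in L. g x \<le> F (h x)"
  shows "(g \<longlongrightarrow> F t) L"
  by (rule tendsto_sandwich[OF assms(4,5) isCont_tendsto_compose[OF assms(1,2)]
        isCont_tendsto_compose[OF assms(1,3)]])

text \<open>The bounds hold for every \<open>\<rho> > 0\<close>.\<close>
lemma A_event_detection_error:
  fixes Q :: "'a measure"
  assumes "prob_space Q" and "sets Q = sets P2" and "AE x in Q. lr P1 P2 x \<noteq> 0"
    and "simple_undirected_graph E n" and "graph_connected E n" and "0 < n"
  shows "(\<forall>\<rho>. 0 < \<rho> \<and> \<rho> < real n / (4 * real (num_edges E n)) \<longrightarrow>
        1 - F_dist Q n P1 P2 (\<tau> + 4 * \<rho> * real (num_edges E n) / real n)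
          \<le> measure (PiM {..<n} (\<lambda>_. Q)) (A_event E n P1 P2 \<tau> \<rho>)
        \<and> measure (PiM {..<n} (\<lambda>_. Q)) (A_event E n P1 P2 \<tau> \<rho>)
          \<le> 1 - F_dist Q n P1 P2 (\<tau> - 12 * \<rho> * real n))
   \<and> measure (PiM {..<n} (\<lambda>_. Q)) (A_star n P1 P2 \<tau>) = 1 - F_dist Q n P1 P2 \<tau>
   \<and> (isCont (F_dist Q n P1 P2) \<tau> \<longrightarrow>
        ((\<lambda>\<rho>. measure (PiM {..<n} (\<lambda>_. Q)) (A_event E n P1 P2 \<tau> \<rho>))
           \<longlongrightarrow> measure (PiM {..<n} (\<lambda>_. Q)) (A_star n P1 P2 \<tau>)) (at_right 0))"
proof (intro conjI impI allI)
  note bounds = measure_A_event_bounds[OF assms]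
  show "1 - F_dist Q n P1 P2 (\<tau> + 4 * \<rho> * real (num_edges E n) / real n)
      \<le> measure (PiM {..<n} (\<lambda>_. Q)) (A_event E n P1 P2 \<tau> \<rho>)"
    and "measure (PiM {..<n} (\<lambda>_. Q)) (A_event E n P1 P2 \<tau> \<rho>)
      \<le> 1 - F_dist Q n P1 P2 (\<tau> - 12 * \<rho> * real n)"
    if "0 < \<rho> \<and> \<rho> < real n / (4 * real (num_edges E n))" for \<rho>
    using bounds that by auto
  show star: "measure (PiM {..<n} (\<lambda>_. Q)) (A_star n P1 P2 \<tau>) = 1 - F_dist Q n P1 P2 \<tau>"
    unfolding A_star_eq[OF assms(2)] by (rule measure_avg_llr_gt[OF assms(1,2)])
  assume "isCont (F_dist Q n P1 P2) \<tau>"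
  then have cont: "isCont (\<lambda>s. 1 - F_dist Q n P1 P2 s) \<tau>" by (intro continuous_intros)
  have lim_lower: "((\<lambda>\<rho>. \<tau> + 4 * \<rho> * real (num_edges E n) / real n) \<longlongrightarrow> \<tau>) (at_right 0)"
    and lim_upper: "((\<lambda>\<rho>. \<tau> - 12 * \<rho> * real n) \<longlongrightarrow> \<tau>) (at_right 0)"
    using \<open>0 < n\<close> by (auto intro!: tendsto_eq_intros)
  have pos: "\<forall>\<^sub>F \<rho> in at_right 0. (0::real) < \<rho>"
    by (rule eventually_at_right_less)
  show "((\<lambda>\<rho>. measure (PiM {..<n} (\<lambda>_. Q)) (A_event E n P1 P2 \<tau> \<rho>))
      \<longlongrightarrow> measure (PiM {..<n} (\<lambda>_. Q)) (A_star n P1 P2 \<tau>)) (at_right 0)"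
    unfolding star
    by (rule tendsto_sandwich_isCont[OF cont lim_lower lim_upper])
      (use pos in \<open>auto elim!: eventually_mono intro: bounds\<close>)
qed

theorem mainTheorem6:
  fixes P1 P2 :: "'a measure" and E :: "nat \<Rightarrow> nat \<Rightarrow> bool" and n :: nat and \<tau> :: real
  assumes "prob_space P1" and "prob_space P2" and "sets P1 = sets P2"
    and "absolutely_continuous P1 P2" and "absolutely_continuous P2 P1"
    and "n \<ge> 2" and "simple_undirected_graph E n" and "graph_connected E n"
  shows "\<forall>Q \<in> {P1, P2}.
     (\<forall>\<rho>. 0 < \<rho> \<and> \<rho> < real n / (4 * real (num_edges E n)) \<longrightarrow>
        1 - F_dist Q n P1 P2 (\<tau> + 4 * \<rho> * real (num_edges E n) / real n)
          \<le> measure (PiM {..<n} (\<lambda>_. Q)) (A_event E n P1 P2 \<tau> \<rho>)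
        \<and> measure (PiM {..<n} (\<lambda>_. Q)) (A_event E n P1 P2 \<tau> \<rho>)
          \<le> 1 - F_dist Q n P1 P2 (\<tau> - 12 * \<rho> * real n))
   \<and> measure (PiM {..<n} (\<lambda>_. Q)) (A_star n P1 P2 \<tau>) = 1 - F_dist Q n P1 P2 \<tau>
   \<and> (isCont (F_dist Q n P1 P2) \<tau> \<longrightarrow>
        ((\<lambda>\<rho>. measure (PiM {..<n} (\<lambda>_. Q)) (A_event E n P1 P2 \<tau> \<rho>))
           \<longlongrightarrow> measure (PiM {..<n} (\<lambda>_. Q)) (A_star n P1 P2 \<tau>)) (at_right 0))"
proof -
  have "0 < n" using \<open>n \<ge> 2\<close> by simp
  note error = A_event_detection_error[OF _ _ _ assms(7,8) this, of _ P2 P1 \<tau>]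
  show ?thesis
    using error[OF assms(1,3) AE_lr_nonzero_P1[OF assms(1-5)]]
      error[OF assms(2) refl AE_lr_nonzero_P2[OF assms(1-5)]]
    by blast
qed

end
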